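(* Let $V$ be a vector space of odd dimension $n$ over a field $\mathbb{F}$ with an alternating bilinear form $\mathsf{s}$ of maximal rank, $p$ a $1$-dimensional subspace with $p\cap\mathrm{Rad}(V)=0$, and $H$ a complement of $p$ in $V$ containing $\mathrm{Rad}(V)$. Then every triangle of $\Pi(p,H)$ is null-homotopic.
   Context: $\mathrm{Rad}(U)=U\cap U^\perp$; maximal rank means $\dim\mathrm{Rad}(V)\le1$. $\Pi(p,H)$: its objects are the subspaces $U\le H$ with $1\le\dim U\le n-2$ such that $\mathrm{Rad}(V)\not\subseteq U$, $\dim\mathrm{Rad}(U)\le 2$, and either $\mathrm{Rad}(U)=0$ or $\mathrm{Rad}(U)\not\subseteq p^\perp$; the type of $U$ is $\dim U$; points are objects of type 1, lines are objects of type 2. For objects $U\ne W$ with $\dim U<\dim W$, they are incident iff either $\dim W$ is odd and $U\subseteq W$, or $\dim W$ is even, $U\subseteq W$ and $U\cap\mathrm{Rad}(W\cap p^\perp)=0$. A path is a sequence of objects, consecutive ones incident and distinct; a triangle is a closed path $p_1,L_1,p_2,L_2,p_3,L_3,p_1$ with $p_i$ points and $L_i$ lines. A closed path is null-homotopic if it can be reduced to the trivial path by repeatedly inserting or removing closed paths of length $2$ or $3$. *)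

theory Defs
  imports Complex_Main
begin

text \<open>Vector space V = UNIV :: 'v set over the field 'f, with scalar multiplication scale.
  Subspaces are sets U with module.subspace scale U.\<close>

definition alt_bilinear :: "('f::field \<Rightarrow> 'v::ab_group_add \<Rightarrow> 'v) \<Rightarrow> ('v \<Rightarrow> 'v \<Rightarrow> 'f) \<Rightarrow> bool" where
  "alt_bilinear scale s \<longleftrightarrow>
     (\<forall>a x y z. s (scale a x + y) z = a * s x z + s y z) \<and>
     (\<forall>a x y z. s x (scale a y + z) = a * s x y + s x z) \<and>
     (\<forall>x. s x x = 0)"

definition orth :: "('v \<Rightarrow> 'v \<Rightarrow> 'f::zero) \<Rightarrow> 'v set \<Rightarrow> 'v set" where
  "orth s U = {v. \<forall>u\<in>U. s u v = 0}"

definition Rad :: "('v \<Rightarrow> 'v \<Rightarrow> 'f::zero) \<Rightarrow> 'v set \<Rightarrow> 'v set" where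
  "Rad s U = U \<inter> orth s U"

definition is_object :: "('f::field \<Rightarrow> 'v::ab_group_add \<Rightarrow> 'v) \<Rightarrow> ('v \<Rightarrow> 'v \<Rightarrow> 'f) \<Rightarrow> 'v set \<Rightarrow> 'v set \<Rightarrow> 'v set \<Rightarrow> bool" where
  "is_object scale s p H U \<longleftrightarrow>
     module.subspace scale U \<and> U \<subseteq> H \<and>
     1 \<le> vector_space.dim scale U \<and> vector_space.dim scale U + 2 \<le> vector_space.dim scale (UNIV::'v set) \<and>
     \<not> Rad s UNIV \<subseteq> U \<and>
     vector_space.dim scale (Rad s U) \<le> 2 \<and>
     (Rad s U = {0} \<or> \<not> Rad s U \<subseteq> orth s p)"

definition inc_lt :: "('f::field \<Rightarrow> 'v::ab_group_add \<Rightarrow> 'v) \<Rightarrow> ('v \<Rightarrow> 'v \<Rightarrow> 'f) \<Rightarrow> 'v set \<Rightarrow> 'v set \<Rightarrow> 'v set \<Rightarrow> bool" where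
  "inc_lt scale s p U W \<longleftrightarrow>
     vector_space.dim scale U < vector_space.dim scale W \<and>
     ((odd (vector_space.dim scale W) \<and> U \<subseteq> W) \<or>
      (even (vector_space.dim scale W) \<and> U \<subseteq> W \<and> U \<inter> Rad s (W \<inter> orth s p) = {0}))"

definition incident :: "('f::field \<Rightarrow> 'v::ab_group_add \<Rightarrow> 'v) \<Rightarrow> ('v \<Rightarrow> 'v \<Rightarrow> 'f) \<Rightarrow> 'v set \<Rightarrow> 'v set \<Rightarrow> 'v set \<Rightarrow> 'v set \<Rightarrow> bool" where
  "incident scale s p H U W \<longleftrightarrow>
     is_object scale s p H U \<and> is_object scale s p H W \<and> U \<noteq> W \<and>
     (inc_lt scale s p U W \<or> inc_lt scale s p W U)"

text \<open>Paths in a geometry with object predicate Obj and incidence relation I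
  (a path of length k is a list of k+1 objects).\<close>
definition is_path :: "('a \<Rightarrow> bool) \<Rightarrow> ('a \<Rightarrow> 'a \<Rightarrow> bool) \<Rightarrow> 'a list \<Rightarrow> bool" where
  "is_path Obj I xs \<longleftrightarrow> xs \<noteq> [] \<and> (\<forall>x\<in>set xs. Obj x) \<and>
     (\<forall>i. Suc i < length xs \<longrightarrow> I (xs ! i) (xs ! Suc i) \<and> xs ! i \<noteq> xs ! Suc i)"

definition is_closed_path :: "('a \<Rightarrow> bool) \<Rightarrow> ('a \<Rightarrow> 'a \<Rightarrow> bool) \<Rightarrow> 'a list \<Rightarrow> bool" where
  "is_closed_path Obj I xs \<longleftrightarrow> is_path Obj I xs \<and> hd xs = last xs"

text \<open>One elementary step: insert a closed path of length 2 or 3 (based at a vertex a of the path).\<close>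
definition insert_step :: "('a \<Rightarrow> bool) \<Rightarrow> ('a \<Rightarrow> 'a \<Rightarrow> bool) \<Rightarrow> 'a list \<Rightarrow> 'a list \<Rightarrow> bool" where
  "insert_step Obj I \<gamma> \<delta> \<longleftrightarrow> is_path Obj I \<gamma> \<and>
     (\<exists>xs a ys c. \<gamma> = xs @ a # ys \<and> \<delta> = xs @ a # c @ ys \<and>
        is_closed_path Obj I (a # c) \<and> (length c = 2 \<or> length c = 3))"

definition homotopic :: "('a \<Rightarrow> bool) \<Rightarrow> ('a \<Rightarrow> 'a \<Rightarrow> bool) \<Rightarrow> 'a list \<Rightarrow> 'a list \<Rightarrow> bool" where
  "homotopic Obj I = (\<lambda>\<gamma> \<delta>. insert_step Obj I \<gamma> \<delta> \<or> insert_step Obj I \<delta> \<gamma>)\<^sup>*\<^sup>*"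

definition null_homotopic :: "('a \<Rightarrow> bool) \<Rightarrow> ('a \<Rightarrow> 'a \<Rightarrow> bool) \<Rightarrow> 'a list \<Rightarrow> bool" where
  "null_homotopic Obj I \<gamma> \<longleftrightarrow> homotopic Obj I \<gamma> [hd \<gamma>]"

definition is_triangle :: "('f::field \<Rightarrow> 'v::ab_group_add \<Rightarrow> 'v) \<Rightarrow> ('v \<Rightarrow> 'v \<Rightarrow> 'f) \<Rightarrow> 'v set \<Rightarrow> 'v set \<Rightarrow> 'v set list \<Rightarrow> bool" where
  "is_triangle scale s p H \<gamma> \<longleftrightarrow>
     (\<exists>x1 L1 x2 L2 x3 L3. \<gamma> = [x1, L1, x2, L2, x3, L3, x1] \<and>
        (\<forall>x\<in>{x1, x2, x3}. vector_space.dim scale x = 1) \<and>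
        (\<forall>L\<in>{L1, L2, L3}. vector_space.dim scale L = 2) \<and>
        is_path (is_object scale s p H) (incident scale s p H) \<gamma>)"

end

theory Submission
  imports Defs
begin

text \<open>Write \<open>p = span {e}\<close> and \<open>Rad V = span {r}\<close>, so \<open>r \<in> H\<close>. Every point of \<open>\<Pi>(p,H)\<close> is spanned
  by a vector \<open>u \<in> H\<close> with \<open>s e u = 1\<close>. If two vertices of a triangle coincide, a backtrack
  turns it into a digon, which collapses because two distinct points lie on at most one line.
  Otherwise the three lines are spanned by pairs of the generators \<open>u\<^sub>1, u\<^sub>2, u\<^sub>3\<close>. If these are
  dependent, the three lines coincide. If they are independent, the triangle is coned off from a
  single odd-dimensional object containing all of it: the plane \<open>span {u\<^sub>1, u\<^sub>2, u\<^sub>3}\<close> when its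
  radical is not orthogonal to \<open>p\<close>, and otherwise, if \<open>r\<close> is not in that plane, a five-dimensional
  object built from \<open>u\<^sub>1, u\<^sub>2 - u\<^sub>1, u\<^sub>3 - u\<^sub>1\<close> and two dual vectors in \<open>H\<close>. In the remaining case
  \<open>r = l\<^sub>1 u\<^sub>1 + l\<^sub>2 u\<^sub>2 + l\<^sub>3 u\<^sub>3\<close> with all \<open>l\<^sub>i \<noteq> 0\<close>; these coefficients link the radicals of the
  planes \<open>span {u\<^sub>i, u\<^sub>j, y}\<close>, so a single apex \<open>y\<close> making one of them an object makes all three
  objects, and the triangle splits into three triangles coned off by these planes.\<close>

section \<open>Homotopy of closed paths in an incidence graph\<close>

locale incidence_graph =
  fixes Obj :: "'a \<Rightarrow> bool" and I :: "'a \<Rightarrow> 'a \<Rightarrow> bool"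
  assumes incident_sym: "I x y \<Longrightarrow> I y x"
    and incident_irrefl: "I x y \<Longrightarrow> x \<noteq> y"
    and incident_obj: "I x y \<Longrightarrow> Obj x"
begin

abbreviation "path \<equiv> is_path Obj I"
abbreviation "homot \<equiv> homotopic Obj I"

lemma path_iff_successively: "path xs \<longleftrightarrow> xs \<noteq> [] \<and> (\<forall>x\<in>set xs. Obj x) \<and> successively I xs"
proof -
  have "successively (\<lambda>x y. I x y \<and> x \<noteq> y) xs = successively I xs"
    using incident_irrefl by (intro successively_cong) auto
  then show ?thesis
    unfolding is_path_def by (simp add: successively_conv_nth)
qed

lemma path_Cons_Cons: "path (x # y # zs) \<longleftrightarrow> I x y \<and> path (y # zs)"
  unfolding path_iff_successively using incident_obj by auto

lemma path_singleton: "path [x] \<longleftrightarrow> Obj x"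
  unfolding path_iff_successively by auto

lemma path_triple: "I x y \<Longrightarrow> I y z \<Longrightarrow> path [x, y, z]"
  using incident_obj incident_sym by (auto simp: path_Cons_Cons path_singleton)

lemma path_infix: "path (xs @ \<alpha> @ ys) \<Longrightarrow> \<alpha> \<noteq> [] \<Longrightarrow> path \<alpha>"
  unfolding path_iff_successively by (auto simp: successively_append_iff)

lemma path_replace_infix:
  assumes "path (xs @ \<alpha> @ ys)" "path \<beta>" "\<alpha> \<noteq> []" "hd \<alpha> = hd \<beta>" "last \<alpha> = last \<beta>"
  shows "path (xs @ \<beta> @ ys)"
  using assms unfolding path_iff_successively by (auto simp: successively_append_iff)

lemma insert_step_path:
  assumes "insert_step Obj I \<gamma> \<delta>"
  shows "path \<delta> \<and> hd \<delta> = hd \<gamma> \<and> last \<delta> = last \<gamma>"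
proof -
  from assms obtain xs a ys c where \<gamma>: "\<gamma> = xs @ a # ys" and \<delta>: "\<delta> = xs @ a # c @ ys"
    and closed: "is_closed_path Obj I (a # c)" and "path \<gamma>" and "c \<noteq> []"
    unfolding insert_step_def by (metis list.size(3) zero_neq_numeral)
  have last_a: "last (a # c) = a" using closed unfolding is_closed_path_def by simp
  have "path (xs @ (a # c) @ ys)"
    using path_replace_infix[of xs "[a]" ys "a # c"] \<open>path \<gamma>\<close> closed \<gamma> last_a
    unfolding is_closed_path_def by auto
  moreover have "hd \<delta> = hd \<gamma>" using \<gamma> \<delta> by (cases xs) auto
  moreover have "last \<delta> = last \<gamma>" using \<gamma> \<delta> last_a \<open>c \<noteq> []\<close> by (cases ys) auto
  ultimately show ?thesis using \<delta> by simp
qed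

lemma insert_step_homot: "insert_step Obj I \<gamma> \<delta> \<Longrightarrow> homot \<gamma> \<delta>"
  unfolding homotopic_def by (rule r_into_rtranclp) simp

lemma homot_sym: "homot \<gamma> \<delta> \<Longrightarrow> homot \<delta> \<gamma>"
  unfolding homotopic_def
  by (induction rule: rtranclp_induct) (auto intro: converse_rtranclp_into_rtranclp)

lemma homot_trans: "homot \<alpha> \<beta> \<Longrightarrow> homot \<beta> \<gamma> \<Longrightarrow> homot \<alpha> \<gamma>"
  unfolding homotopic_def by (rule rtranclp_trans)

lemma homot_path:
  assumes "homot \<gamma> \<delta>" "path \<gamma>"
  shows "path \<delta> \<and> hd \<delta> = hd \<gamma> \<and> last \<delta> = last \<gamma>"
  using assms(1) unfolding homotopic_def
proof (induction rule: rtranclp_induct)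
  case base
  then show ?case using assms(2) by simp
next
  case (step \<beta> \<delta>)
  from step.hyps(2) show ?case
  proof
    assume "insert_step Obj I \<beta> \<delta>"
    then show ?thesis using insert_step_path step.IH by auto
  next
    assume rev_step: "insert_step Obj I \<delta> \<beta>"
    then have "path \<delta>" unfolding insert_step_def by auto
    then show ?thesis using insert_step_path[OF rev_step] step.IH by auto
  qed
qed

lemma homot_backtrack:
  assumes "path (xs @ [a, b, a] @ ys)"
  shows "homot (xs @ [a, b, a] @ ys) (xs @ [a] @ ys)"
proof -
  have aba: "path [a, b, a]" using path_infix[OF assms] by simp
  then have "path [a]" using incident_obj by (simp add: path_Cons_Cons path_singleton)
  then have "path (xs @ [a] @ ys)" using path_replace_infix[OF assms, of "[a]"] by simp
  then have "insert_step Obj I (xs @ [a] @ ys) (xs @ [a, b, a] @ ys)"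
    using aba unfolding insert_step_def is_closed_path_def
    by (intro conjI exI[of _ xs] exI[of _ a] exI[of _ ys] exI[of _ "[b, a]"]) auto
  then show ?thesis by (rule homot_sym[OF insert_step_homot])
qed

lemma homot_insert_backtrack:
  assumes "path (xs @ [a] @ ys)" "I a b"
  shows "homot (xs @ [a] @ ys) (xs @ [a, b, a] @ ys)"
proof -
  have "path (xs @ [a, b, a] @ ys)"
    using path_replace_infix[OF assms(1) path_triple] assms(2) incident_sym by auto
  then show ?thesis by (rule homot_sym[OF homot_backtrack])
qed

lemma homot_shortcut:
  assumes abc: "path (xs @ [a, b, c] @ ys)" and "I a c"
  shows "homot (xs @ [a, b, c] @ ys) (xs @ [a, c] @ ys)"
proof -
  \<comment> \<open>insert the triangle \<open>a, b, c, a\<close> at \<open>a\<close>, then remove the backtrack \<open>c, a, c\<close>\<close>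
  have "path [a, b, c, a]"
    using path_infix[OF abc] \<open>I a c\<close> incident_sym incident_obj by (auto simp: path_Cons_Cons path_singleton)
  moreover have "path [a, c]"
    using \<open>I a c\<close> incident_obj incident_sym by (auto simp: path_Cons_Cons path_singleton)
  then have "path (xs @ [a, c] @ ys)" using path_replace_infix[OF abc, of "[a, c]"] by simp
  ultimately have step: "insert_step Obj I (xs @ [a, c] @ ys) (xs @ [a, b, c, a, c] @ ys)"
    unfolding insert_step_def is_closed_path_def
    by (intro conjI exI[of _ xs] exI[of _ a] exI[of _ "c # ys"] exI[of _ "[b, c, a]"]) auto
  then have "path ((xs @ [a, b]) @ [c, a, c] @ ys)" using insert_step_path by simp
  then have "homot (xs @ [a, b, c, a, c] @ ys) (xs @ [a, b, c] @ ys)"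
    using homot_backtrack by fastforce
  then show ?thesis using homot_trans[OF insert_step_homot[OF step]] homot_sym by blast
qed

lemma homot_digon:
  assumes "path [x, L, y, M, x]" "L = M \<or> x = y"
  shows "homot [x, L, y, M, x] [x]"
  using assms(2)
proof
  assume "L = M"
  then have "homot ([x] @ [L, y, L] @ [x]) ([] @ [x, L, x] @ [])"
    using homot_backtrack[of "[x]" L y "[x]"] assms(1) by simp
  moreover have "homot ([] @ [x, L, x] @ []) [x]"
    using homot_backtrack[of "[]" x L "[]"] homot_path[OF calculation] assms(1) \<open>L = M\<close> by simp
  ultimately show ?thesis using homot_trans \<open>L = M\<close> by simp
next
  assume "x = y"
  then have "homot ([] @ [x, L, x] @ [M, x]) ([] @ [x, M, x] @ [])"
    using homot_backtrack[of "[]" x L "[M, x]"] assms(1) by simp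
  moreover have "homot ([] @ [x, M, x] @ []) [x]"
    using homot_backtrack[of "[]" x M "[]"] homot_path[OF calculation] assms(1) \<open>x = y\<close> by simp
  ultimately show ?thesis using homot_trans \<open>x = y\<close> by simp
qed

lemma homot_hexagon_single_middle:
  assumes "path [x1, L, x2, L, x3, L, x1]"
  shows "homot [x1, L, x2, L, x3, L, x1] [x1]"
proof -
  have "homot ([x1] @ [L, x2, L] @ [x3, L, x1]) ([x1] @ [L] @ [x3, L, x1])"
    using homot_backtrack[of "[x1]" L x2 "[x3, L, x1]"] assms by simp
  moreover have "homot [x1, L, x3, L, x1] [x1]"
    using homot_digon homot_path[OF calculation] assms by simp
  ultimately show ?thesis using homot_trans by simp
qed

lemma homot_replace_middle:
  assumes xLy: "path (xs @ [x, L, y] @ ys)" and "I x W" "I L W" "I y W"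
  shows "homot (xs @ [x, L, y] @ ys) (xs @ [x, W, y] @ ys)"
proof -
  have "I L y" using path_infix[OF xLy] by (simp add: path_Cons_Cons)
  have "path [L, W, y]" using path_triple \<open>I L W\<close> \<open>I y W\<close> incident_sym by blast
  then have LWy: "path ((xs @ [x]) @ [L, W, y] @ ys)"
    using path_replace_infix[of "xs @ [x]" "[L, y]" ys "[L, W, y]"] xLy by simp
  have "homot ((xs @ [x]) @ [L, W, y] @ ys) ((xs @ [x]) @ [L, y] @ ys)"
    using homot_shortcut[OF LWy \<open>I L y\<close>] .
  then have "homot (xs @ [x, L, y] @ ys) (xs @ [x, L, W] @ (y # ys))"
    using homot_sym by simp
  moreover have "homot (xs @ [x, L, W] @ (y # ys)) (xs @ [x, W] @ (y # ys))"
    using homot_shortcut[of xs x L W "y # ys"] LWy \<open>I x W\<close> by simp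
  ultimately show ?thesis using homot_trans by simp
qed

lemma homot_replace_middle':
  assumes xWy: "path (xs @ [x, W, y] @ ys)" and "I x L" "I L y" "I L W"
  shows "homot (xs @ [x, W, y] @ ys) (xs @ [x, L, y] @ ys)"
proof -
  have "path (xs @ [x, L, y] @ ys)"
    using path_replace_infix[OF xWy path_triple] assms(2,3) by simp
  moreover have "I x W" "I y W" using path_infix[OF xWy] incident_sym by (auto simp: path_Cons_Cons)
  ultimately show ?thesis using homot_sym[OF homot_replace_middle] \<open>I L W\<close> by blast
qed

lemma homot_cone_hexagon:
  assumes hex: "path [x1, L1, x2, L2, x3, L3, x1]"
    and "I x1 W" "I x2 W" "I x3 W" "I L1 W" "I L2 W" "I L3 W"
  shows "homot [x1, L1, x2, L2, x3, L3, x1] [x1]"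
proof -
  have h1: "homot [x1, L1, x2, L2, x3, L3, x1] [x1, W, x2, L2, x3, L3, x1]"
    using homot_replace_middle[of "[]" x1 L1 x2 "[L2, x3, L3, x1]" W] hex assms by simp
  have p1: "path [x1, W, x2, L2, x3, L3, x1]" using homot_path[OF h1 hex] by simp
  have h2: "homot [x1, W, x2, L2, x3, L3, x1] [x1, W, x2, W, x3, L3, x1]"
    using homot_replace_middle[of "[x1, W]" x2 L2 x3 "[L3, x1]" W] p1 assms by simp
  have p2: "path [x1, W, x2, W, x3, L3, x1]" using homot_path[OF h2 p1] by simp
  have h3: "homot [x1, W, x2, W, x3, L3, x1] [x1, W, x2, W, x3, W, x1]"
    using homot_replace_middle[of "[x1, W, x2, W]" x3 L3 x1 "[]" W] p2 assms by simp
  have p3: "path [x1, W, x2, W, x3, W, x1]" using homot_path[OF h3 p2] by simp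
  have h4: "homot [x1, W, x2, W, x3, W, x1] [x1, W, x3, W, x1]"
    using homot_backtrack[of "[x1]" W x2 "[x3, W, x1]"] p3 by simp
  have p4: "path [x1, W, x3, W, x1]" using homot_path[OF h4 p3] by simp
  have h5: "homot [x1, W, x3, W, x1] [x1, W, x1]"
    using homot_backtrack[of "[x1]" W x3 "[x1]"] p4 by simp
  have p5: "path [x1, W, x1]" using homot_path[OF h5 p4] by simp
  have h6: "homot [x1, W, x1] [x1]"
    using homot_backtrack[of "[]" x1 W "[]"] p5 by simp
  show ?thesis using homot_trans[OF h1 homot_trans[OF h2 homot_trans[OF h3 homot_trans[OF h4
    homot_trans[OF h5 h6]]]]] .
qed

lemma homot_apex_segment:
  assumes xLy: "path (xs @ [x, L, y] @ ys)"
    and "I x W" "I L W" "I y W" "I Q W" "I M W" "I M' W"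
    and "I x M" "I Q M" "I Q M'" "I y M'"
  shows "homot (xs @ [x, L, y] @ ys) (xs @ [x, M, Q, M', y] @ ys)"
proof -
  have h1: "homot (xs @ [x, L, y] @ ys) (xs @ [x, W, y] @ ys)"
    using homot_replace_middle[OF xLy] assms by blast
  have p1: "path ((xs @ [x]) @ [W] @ (y # ys))" using homot_path[OF h1 xLy] by simp
  have h2: "homot ((xs @ [x]) @ [W] @ (y # ys)) ((xs @ [x]) @ [W, Q, W] @ (y # ys))"
    using homot_insert_backtrack[OF p1] incident_sym assms by blast
  have p2: "path (xs @ [x, W, Q] @ (W # y # ys))" using homot_path[OF h2 p1] by simp
  have h3: "homot (xs @ [x, W, Q] @ (W # y # ys)) (xs @ [x, M, Q] @ (W # y # ys))"
    using homot_replace_middle'[OF p2] incident_sym assms by blast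
  have p3: "path ((xs @ [x, M]) @ [Q, W, y] @ ys)" using homot_path[OF h3 p2] by simp
  have h4: "homot ((xs @ [x, M]) @ [Q, W, y] @ ys) ((xs @ [x, M]) @ [Q, M', y] @ ys)"
    using homot_replace_middle'[OF p3] incident_sym assms by blast
  have "homot (xs @ x # L # y # ys) (xs @ x # M # Q # M' # y # ys)"
    using homot_trans[OF h1[simplified] homot_trans[OF h2[simplified]
      homot_trans[OF h3[simplified] h4[simplified]]]] .
  then show ?thesis by simp
qed

lemma homot_apex_hexagon:
  assumes hex: "path [x1, L1, x2, L2, x3, L3, x1]"
    and W1: "I x1 W1" "I L1 W1" "I x2 W1" "I Q W1" "I M1 W1" "I M2 W1"
    and W2: "I x2 W2" "I L2 W2" "I x3 W2" "I Q W2" "I M2 W2" "I M3 W2"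
    and W3: "I x3 W3" "I L3 W3" "I x1 W3" "I Q W3" "I M3 W3" "I M1 W3"
    and M: "I x1 M1" "I x2 M2" "I x3 M3" "I Q M1" "I Q M2" "I Q M3"
  shows "homot [x1, L1, x2, L2, x3, L3, x1] [x1]"
proof -
  have h1: "homot ([] @ [x1, L1, x2] @ [L2, x3, L3, x1]) ([] @ [x1, M1, Q, M2, x2] @ [L2, x3, L3, x1])"
    by (rule homot_apex_segment) (use hex W1 M in auto)
  have p1: "path ([x1, M1, Q, M2] @ [x2, L2, x3] @ [L3, x1])" using homot_path[OF h1] hex by simp
  have h2: "homot ([x1, M1, Q, M2] @ [x2, L2, x3] @ [L3, x1])
      ([x1, M1, Q, M2] @ [x2, M2, Q, M3, x3] @ [L3, x1])"
    by (rule homot_apex_segment[OF p1]) (use W2 M in auto)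
  have p2: "path ([x1, M1, Q, M2, x2, M2, Q, M3] @ [x3, L3, x1] @ [])" using homot_path[OF h2] p1 by simp
  have h3: "homot ([x1, M1, Q, M2, x2, M2, Q, M3] @ [x3, L3, x1] @ [])
      ([x1, M1, Q, M2, x2, M2, Q, M3] @ [x3, M3, Q, M1, x1] @ [])"
    by (rule homot_apex_segment[OF p2]) (use W3 M in auto)
  have p3: "path ([x1, M1, Q] @ [M2, x2, M2] @ [Q, M3, x3, M3, Q, M1, x1])" using homot_path[OF h3] p2 by simp
  note h4 = homot_backtrack[OF p3]
  have p4: "path ([x1, M1] @ [Q, M2, Q] @ [M3, x3, M3, Q, M1, x1])" using homot_path[OF h4] p3 by simp
  note h5 = homot_backtrack[OF p4]
  have p5: "path ([x1, M1, Q] @ [M3, x3, M3] @ [Q, M1, x1])" using homot_path[OF h5] p4 by simp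
  note h6 = homot_backtrack[OF p5]
  have p6: "path ([x1, M1] @ [Q, M3, Q] @ [M1, x1])" using homot_path[OF h6] p5 by simp
  note h7 = homot_backtrack[OF p6]
  have p7: "path ([x1] @ [M1, Q, M1] @ [x1])" using homot_path[OF h7] p6 by simp
  note h8 = homot_backtrack[OF p7]
  have p8: "path ([] @ [x1, M1, x1] @ [])" using homot_path[OF h8] p7 by simp
  note h9 = homot_backtrack[OF p8]
  show ?thesis
    using homot_trans[OF h1[simplified] homot_trans[OF h2[simplified] homot_trans[OF h3[simplified]
      homot_trans[OF h4[simplified] homot_trans[OF h5[simplified] homot_trans[OF h6[simplified]
      homot_trans[OF h7[simplified] homot_trans[OF h8[simplified] h9[simplified]]]]]]]]] .
qed

end

section \<open>Spans of few vectors\<close>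

context vector_space
begin

lemma span_insert_iff: "v \<in> span (insert a S) \<longleftrightarrow> (\<exists>k w. w \<in> span S \<and> v = k *s a + w)"
  by (metis span_breakdown_eq diff_add_cancel add_diff_cancel_left')

lemma span_pair_iff: "v \<in> span {a, b} \<longleftrightarrow> (\<exists>x y. v = x *s a + y *s b)"
  by (auto simp: span_insert_iff span_singleton)

lemma span_triple_iff: "v \<in> span {a, b, c} \<longleftrightarrow> (\<exists>x y z. v = x *s a + y *s b + z *s c)"
  by (auto simp: span_insert_iff span_singleton add.assoc)

lemma span_five_iff:
  "v \<in> span {a, b, c, d, g} \<longleftrightarrow>
    (\<exists>x y z w t. v = x *s a + y *s b + z *s c + w *s d + t *s g)"
  by (simp add: span_insert_iff span_singleton add.assoc) blast

lemma span_set_iff_combination: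
  "v \<in> span (set xs) \<longleftrightarrow> (\<exists>cs. length cs = length xs \<and> v = (\<Sum>(c, x)\<leftarrow>zip cs xs. c *s x))"
proof (induction xs arbitrary: v)
  case Nil
  then show ?case by simp
next
  case (Cons x xs)
  show ?case
  proof
    assume "v \<in> span (set (x # xs))"
    then obtain k cs where "length cs = length xs" "v = k *s x + (\<Sum>(c, x)\<leftarrow>zip cs xs. c *s x)"
      by (auto simp: span_insert_iff Cons.IH)
    then show "\<exists>cs. length cs = length (x # xs) \<and> v = (\<Sum>(c, x)\<leftarrow>zip cs (x # xs). c *s x)"
      by (intro exI[of _ "k # cs"]) simp
  next
    assume "\<exists>cs. length cs = length (x # xs) \<and> v = (\<Sum>(c, x)\<leftarrow>zip cs (x # xs). c *s x)"
    then obtain cs where "length cs = length (x # xs)" "v = (\<Sum>(c, x)\<leftarrow>zip cs (x # xs). c *s x)"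
      by blast
    then show "v \<in> span (set (x # xs))"
      by (cases cs) (auto simp: span_insert_iff Cons.IH)
  qed
qed

lemma independent_if_unique_coeffs:
  assumes "\<And>cs. length cs = length xs \<Longrightarrow> (\<Sum>(c, x)\<leftarrow>zip cs xs. c *s x) = 0 \<Longrightarrow> \<forall>c\<in>set cs. c = 0"
  shows "distinct xs \<and> independent (set xs)"
  using assms
proof (induction xs)
  case Nil
  then show ?case by (simp add: independent_empty)
next
  case (Cons x xs)
  have IH: "distinct xs \<and> independent (set xs)"
    using Cons.prems[of "0 # _"] by (intro Cons.IH) auto
  have "x \<notin> span (set xs)"
  proof
    assume "x \<in> span (set xs)"
    then obtain cs where "length cs = length xs" "x = (\<Sum>(c, x)\<leftarrow>zip cs xs. c *s x)"
      by (auto simp: span_set_iff_combination)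
    then show False using Cons.prems[of "(-1) # cs"] by simp
  qed
  with IH show ?case by (auto simp: independent_insertI span_base)
qed

corollary dim_span_set_if_unique_coeffs:
  assumes "\<And>cs. length cs = length xs \<Longrightarrow> (\<Sum>(c, x)\<leftarrow>zip cs xs. c *s x) = 0 \<Longrightarrow> \<forall>c\<in>set cs. c = 0"
  shows "dim (span (set xs)) = length xs"
proof -
  have "distinct xs \<and> independent (set xs)"
    using assms by (rule independent_if_unique_coeffs)
  then show ?thesis by (simp add: dim_eq_card_independent distinct_card)
qed

lemma dim_span_pair:
  assumes "\<And>x y. x *s a + y *s b = 0 \<Longrightarrow> x = 0 \<and> y = 0"
  shows "dim (span {a, b}) = 2"
proof -
  have "dim (span (set [a, b])) = length [a, b]"
    by (rule dim_span_set_if_unique_coeffs) (auto simp: length_Suc_conv dest!: assms)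
  then show ?thesis by simp
qed

lemma dim_span_triple:
  assumes "\<And>x y z. x *s a + y *s b + z *s c = 0 \<Longrightarrow> x = 0 \<and> y = 0 \<and> z = 0"
  shows "dim (span {a, b, c}) = 3"
proof -
  have "dim (span (set [a, b, c])) = length [a, b, c]"
    by (rule dim_span_set_if_unique_coeffs)
      (auto simp: length_Suc_conv add.assoc[symmetric] dest!: assms)
  then show ?thesis by simp
qed

lemma dim_span_five:
  assumes "\<And>x y z w t. x *s a + y *s b + z *s c + w *s d + t *s g = 0 \<Longrightarrow>
    x = 0 \<and> y = 0 \<and> z = 0 \<and> w = 0 \<and> t = 0"
  shows "dim (span {a, b, c, d, g}) = 5"
proof -
  have "dim (span (set [a, b, c, d, g])) = length [a, b, c, d, g]"
    by (rule dim_span_set_if_unique_coeffs)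
      (auto simp: length_Suc_conv add.assoc[symmetric] dest!: assms)
  then show ?thesis by (simp add: numeral_eq_Suc)
qed

lemma span_scale_singleton:
  assumes "c \<noteq> 0"
  shows "span {c *s x} = span {x}"
proof -
  have "x = inverse c *s (c *s x)" using assms by simp
  then have "x \<in> span {c *s x}" by (metis span_base span_scale singletonI)
  moreover have "c *s x \<in> span {x}" by (simp add: span_base span_scale)
  ultimately show ?thesis by (simp add: span_eq)
qed

lemma obtain_span_singleton_of_dim_1:
  assumes "subspace U" "dim U = 1"
  obtains u where "u \<noteq> 0" "U = span {u}"
proof -
  obtain B where B: "B \<subseteq> U" "independent B" "U \<subseteq> span B" "card B = 1"
    using basis_exists[of U] assms(2) by metis
  then obtain u where u: "B = {u}" by (auto simp: card_1_singleton_iff)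
  have "u \<noteq> 0" using B(2) u dependent_zero by blast
  moreover have "U = span {u}" using B(3) span_minimal[OF B(1) assms(1)] u by auto
  ultimately show ?thesis by (rule that)
qed

end

lemma (in finite_dimensional_vector_space) subspace_eq_span_pair:
  assumes "subspace L" "dim L = 2" "a \<in> L" "b \<in> L" "dim (span {a, b}) = 2"
  shows "L = span {a, b}"
  using subspace_dim_equal[of "span {a, b}" L] span_minimal[of "{a, b}" L] assms by simp

section \<open>Alternating forms\<close>

locale alternating_form = vector_space scale
  for scale :: "'f::field \<Rightarrow> 'v::ab_group_add \<Rightarrow> 'v" (infixr "*s" 75) +
  fixes s :: "'v \<Rightarrow> 'v \<Rightarrow> 'f"
  assumes alt_bilinear: "alt_bilinear scale s"
begin

lemma form_linear_left: "s (a *s x + y) z = a * s x z + s y z"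
  using alt_bilinear unfolding alt_bilinear_def by blast

lemma form_linear_right: "s x (a *s y + z) = a * s x y + s x z"
  using alt_bilinear unfolding alt_bilinear_def by blast

lemma form_self [simp]: "s x x = 0"
  using alt_bilinear unfolding alt_bilinear_def by blast

lemma form_add_left [simp]: "s (x + y) z = s x z + s y z"
  using form_linear_left[of 1 x y z] by simp

lemma form_add_right [simp]: "s z (x + y) = s z x + s z y"
  using form_linear_right[of z 1 x y] by simp

lemma form_zero_left [simp]: "s 0 z = 0"
  using form_add_left[of 0 0 z] by (metis add_0 add_cancel_right_right)

lemma form_zero_right [simp]: "s z 0 = 0"
  using form_add_right[of z 0 0] by (metis add_0 add_cancel_right_right)

lemma form_scale_left [simp]: "s (a *s x) z = a * s x z"
  using form_linear_left[of a x 0 z] by simp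

lemma form_scale_right [simp]: "s z (a *s x) = a * s z x"
  using form_linear_right[of z a x 0] by simp

lemma form_minus_left [simp]: "s (- x) z = - s x z"
  using form_scale_left[of "-1" x z] by simp

lemma form_minus_right [simp]: "s z (- x) = - s z x"
  using form_scale_right[of z "-1" x] by simp

lemma form_diff_left [simp]: "s (x - y) z = s x z - s y z"
  using form_add_left[of x "- y" z] by simp

lemma form_diff_right [simp]: "s z (x - y) = s z x - s z y"
  using form_add_right[of z x "- y"] by simp

lemma form_skew: "s y x = - s x y"
proof -
  have "s (x + y) (x + y) = s x x + s y x + (s x y + s y y)"
    by (simp only: form_add_left form_add_right)
  then have "s x y + s y x = 0" by (simp add: add.commute)
  then show ?thesis by (simp add: add_eq_0_iff)
qed

lemma orth_subspace: "subspace (orth s U)"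
  unfolding subspace_def orth_def by simp

lemma Rad_subspace: "subspace U \<Longrightarrow> subspace (Rad s U)"
  unfolding Rad_def using orth_subspace subspace_inter by blast

lemma Rad_subset: "Rad s U \<subseteq> U"
  unfolding Rad_def by blast

lemma mem_Rad_UNIV_iff: "x \<in> Rad s UNIV \<longleftrightarrow> (\<forall>u. s u x = 0)"
  unfolding Rad_def orth_def by simp

lemma Rad_span_singleton: "Rad s (span {u}) = span {u}"
  unfolding Rad_def orth_def by (auto simp: span_singleton)

lemma Rad_span_pair_isotropic:
  assumes "s a b = 0"
  shows "Rad s (span {a, b}) = span {a, b}"
  using assms form_skew[of a b] unfolding Rad_def orth_def by (auto simp: span_pair_iff)

lemma Rad_span_pair_nondegenerate:
  assumes "s a b \<noteq> 0"
  shows "Rad s (span {a, b}) = {0}"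
proof -
  have "v = 0" if v: "v \<in> Rad s (span {a, b})" for v
  proof -
    obtain x y where vxy: "v = x *s a + y *s b"
      using v Rad_subset span_pair_iff by blast
    have "s a v = 0" "s b v = 0" using v unfolding Rad_def orth_def by (auto simp: span_base)
    then have "x = 0" "y = 0" using assms vxy form_skew[of a b] by auto
    then show ?thesis using vxy by simp
  qed
  moreover have "0 \<in> Rad s (span {a, b})"
    using Rad_subspace[OF subspace_span] subspace_0 by blast
  ultimately show ?thesis by blast
qed

definition radical_vector :: "'v \<Rightarrow> 'v \<Rightarrow> 'v \<Rightarrow> 'v" where
  "radical_vector a b c = s b c *s a - s a c *s b + s a b *s c"

lemma radical_vector_in_Rad: "radical_vector a b c \<in> Rad s (span {a, b, c})"
proof -
  have "s a (radical_vector a b c) = 0" "s b (radical_vector a b c) = 0"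
    "s c (radical_vector a b c) = 0"
    unfolding radical_vector_def using form_skew[of a b] form_skew[of a c] form_skew[of b c]
    by (simp_all add: algebra_simps)
  then have "s v (radical_vector a b c) = 0" if "v \<in> span {a, b, c}" for v
    using that by (auto simp: span_triple_iff)
  moreover have "radical_vector a b c \<in> span {a, b, c}"
    unfolding radical_vector_def by (intro span_add span_diff span_scale span_base) auto
  ultimately show ?thesis unfolding Rad_def orth_def by blast
qed

lemma coeffs_zero_if_in_Rad_UNIV:
  assumes e: "s e (radical_vector a b c) \<noteq> 0" and v: "x *s a + y *s b + z *s c \<in> Rad s UNIV"
  shows "x = 0 \<and> y = 0 \<and> z = 0"
proof -
  have skew: "s b a = - s a b" "s c a = - s a c" "s c b = - s b c"
    by (simp_all add: form_skew[symmetric])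
  have "s (x *s a + y *s b + z *s c) a = 0" "s (x *s a + y *s b + z *s c) b = 0"
    "s (x *s a + y *s b + z *s c) c = 0" "s e (x *s a + y *s b + z *s c) = 0"
    using v form_skew unfolding mem_Rad_UNIV_iff by (metis neg_equal_0_iff_equal)+
  then have F: "x * s a c + y * s b c = 0" "x * s a b - z * s b c = 0" "- y * s a b - z * s a c = 0"
    "x * s e a + y * s e b + z * s e c = 0"
    using skew by simp_all
  let ?D = "s e (radical_vector a b c)"
  \<comment> \<open>Cramer's rule: each of \<open>x * ?D\<close>, \<open>y * ?D\<close>, \<open>z * ?D\<close> is a combination of the equations \<open>F\<close>\<close>
  have "x * ?D = s b c * (x * s e a + y * s e b + z * s e c) - s e b * (x * s a c + y * s b c)
      + s e c * (x * s a b - z * s b c)"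
    by (simp add: radical_vector_def algebra_simps)
  then have "x * ?D = 0" using F by simp
  moreover have "y * ?D = - s a c * (x * s e a + y * s e b + z * s e c)
      + s e a * (x * s a c + y * s b c) - s e c * (- y * s a b - z * s a c)"
    by (simp add: radical_vector_def algebra_simps)
  then have "y * ?D = 0" using F by simp
  moreover have "z * ?D = s a b * (x * s e a + y * s e b + z * s e c)
      - s e a * (x * s a b - z * s b c) + s e b * (- y * s a b - z * s a c)"
    by (simp add: radical_vector_def algebra_simps)
  then have "z * ?D = 0" using F by simp
  ultimately show ?thesis using e by simp
qed

lemma obtain_dual_vector:
  assumes "x \<notin> Rad s UNIV"
  obtains c where "s x c = 1"
proof -
  obtain u where "s u x \<noteq> 0" using assms mem_Rad_UNIV_iff by blast
  then have "s x (inverse (s x u) *s u) = 1" using form_skew[of x u] by simp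
  then show ?thesis by (rule that)
qed

lemma obtain_dual_vector_pair:
  assumes indep: "\<And>a b. a *s x + b *s y \<in> Rad s UNIV \<Longrightarrow> a = 0 \<and> b = 0"
  obtains c where "s x c = 0" "s y c = 1"
proof -
  obtain cx where cx: "s x cx = 1"
    using indep[of 1 0] obtain_dual_vector by fastforce
  define y' where "y' = y - s y cx *s x"
  have "(- s y cx) *s x + 1 *s y \<notin> Rad s UNIV" using indep by fastforce
  then have "y' \<notin> Rad s UNIV" unfolding y'_def by (simp add: algebra_simps)
  then obtain c0 where c0: "s y' c0 = 1" by (rule obtain_dual_vector)
  define c where "c = c0 - s x c0 *s cx"
  have "s x c = 0" "s y c = 1"
    using c0 cx unfolding c_def y'_def by (simp_all add: algebra_simps)
  then show ?thesis by (rule that)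
qed

lemma obtain_dual_vector_triple:
  assumes indep: "\<And>a b d. a *s x + b *s y + d *s z \<in> Rad s UNIV \<Longrightarrow> a = 0 \<and> b = 0 \<and> d = 0"
  obtains c where "s x c = 0" "s y c = 0" "s z c = 1"
proof -
  obtain cx where cx: "s y cx = 0" "s x cx = 1"
  proof (rule obtain_dual_vector_pair[of y x])
    fix a b assume "a *s y + b *s x \<in> Rad s UNIV"
    then have "b *s x + a *s y + 0 *s z \<in> Rad s UNIV" by (simp add: add.commute)
    then show "a = 0 \<and> b = 0" using indep by blast
  qed
  obtain cy where cy: "s x cy = 0" "s y cy = 1"
    using obtain_dual_vector_pair[of x y] indep[of _ _ 0] by auto
  define z' where "z' = z - s z cx *s x - s z cy *s y"
  have "(- s z cx) *s x + (- s z cy) *s y + 1 *s z \<notin> Rad s UNIV" using indep by fastforce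
  then have "z' \<notin> Rad s UNIV" unfolding z'_def by (simp add: algebra_simps)
  then obtain c0 where c0: "s z' c0 = 1" by (rule obtain_dual_vector)
  define c where "c = c0 - s x c0 *s cx - s y c0 *s cy"
  have "s x c = 0" "s y c = 0" "s z c = 1"
    using c0 cx cy unfolding c_def z'_def by (simp_all add: algebra_simps)
  then show ?thesis by (rule that)
qed

end

section \<open>Objects of \<open>\<Pi>(p,H)\<close>\<close>

lemma incidence_graph_Pi: "incidence_graph (is_object scale s p H) (incident scale s p H)"
  by unfold_locales (auto simp: incident_def)

locale Pi_geometry = finite_dimensional_vector_space scale Bs + alternating_form scale s
  for scale :: "'f::field \<Rightarrow> 'v::ab_group_add \<Rightarrow> 'v" (infixr "*s" 75) and Bs :: "'v set"
    and s :: "'v \<Rightarrow> 'v \<Rightarrow> 'f" +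
  fixes p H :: "'v set" and n :: nat and e r :: 'v
  assumes dim_UNIV_eq: "dim (UNIV :: 'v set) = n" and odd_n: "odd n"
    and dim_Rad_UNIV: "dim (Rad s UNIV) \<le> 1" and r_in_Rad: "r \<in> Rad s UNIV" and r_nonzero: "r \<noteq> 0"
    and p_eq: "p = span {e}"
    and H_subspace: "subspace H" and e_notin_H: "e \<notin> H" and r_in_H: "r \<in> H"
    and H_complement: "\<And>x. \<exists>h t. h \<in> H \<and> x = h + t *s e"
begin

abbreviation "Obj \<equiv> is_object scale s p H"
abbreviation "Inc \<equiv> incident scale s p H"

sublocale ig: incidence_graph Obj Inc
  by (rule incidence_graph_Pi)

lemma Rad_UNIV_eq: "Rad s UNIV = span {r}"
proof -
  have "span {r} \<subseteq> Rad s UNIV"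
    using span_minimal[OF _ Rad_subspace[OF subspace_UNIV]] r_in_Rad by simp
  moreover have "dim (Rad s UNIV) \<le> dim (span {r})" using dim_Rad_UNIV r_nonzero by simp
  ultimately have "span {r} = Rad s UNIV"
    by (rule subspace_dim_equal[OF subspace_span Rad_subspace[OF subspace_UNIV]])
  then show ?thesis by simp
qed

lemma form_r_left [simp]: "s r u = 0" and form_r_right [simp]: "s u r = 0"
  using r_in_Rad form_skew[of u r] unfolding mem_Rad_UNIV_iff by simp_all

lemma span_subset_H: "X \<subseteq> H \<Longrightarrow> span X \<subseteq> H"
  by (rule span_minimal[OF _ H_subspace])

lemma scale_e_in_H: "t *s e \<in> H \<Longrightarrow> t = 0"
proof (rule ccontr)
  assume "t *s e \<in> H" "t \<noteq> 0"
  then have "inverse t *s (t *s e) \<in> H" using subspace_scale[OF H_subspace] by blast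
  then show False using \<open>t \<noteq> 0\<close> e_notin_H by simp
qed

lemma orth_p_iff: "x \<in> orth s p \<longleftrightarrow> s e x = 0"
  unfolding orth_def p_eq span_singleton by auto

lemma is_objectI:
  assumes "subspace U" "U \<subseteq> H" "1 \<le> dim U" "dim U + 2 \<le> n" "r \<notin> U" "dim (Rad s U) \<le> 2"
    "Rad s U = {0} \<or> (\<exists>w\<in>Rad s U. s e w \<noteq> 0)"
  shows "Obj U"
  using assms r_in_Rad dim_UNIV_eq orth_p_iff unfolding is_object_def by blast

lemma object_subspace: "Obj U \<Longrightarrow> subspace U"
  and object_subset_H: "Obj U \<Longrightarrow> U \<subseteq> H"
  and object_dim_le: "Obj U \<Longrightarrow> dim U + 2 \<le> n"
  unfolding is_object_def dim_UNIV_eq by simp_all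

lemma object_r_notin: "Obj U \<Longrightarrow> r \<notin> U"
  using span_minimal[of "{r}" U] object_subspace Rad_UNIV_eq unfolding is_object_def by auto

lemma object_point:
  assumes "u \<in> H" "s e u \<noteq> 0" "3 \<le> n"
  shows "Obj (span {u})"
proof (rule is_objectI)
  have "u \<noteq> 0" using assms(2) by auto
  then show "1 \<le> dim (span {u})" "dim (span {u}) + 2 \<le> n" using assms(3) by simp_all
  show "r \<notin> span {u}"
  proof
    assume "r \<in> span {u}"
    then obtain k where "r = k *s u" by (auto simp: span_singleton)
    then show False using form_r_right[of e] assms(2) r_nonzero by simp
  qed
  show "dim (Rad s (span {u})) \<le> 2" "Rad s (span {u}) = {0} \<or> (\<exists>w\<in>Rad s (span {u}). s e w \<noteq> 0)"
    using \<open>u \<noteq> 0\<close> assms(2) by (auto simp: Rad_span_singleton span_base)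
qed (use span_subset_H assms(1) in auto)

lemma object_line:
  assumes ab: "a \<in> H" "b \<in> H" "s e a \<noteq> 0" and n: "4 \<le> n"
    and indep: "\<And>x y. x *s a + y *s b \<in> Rad s UNIV \<Longrightarrow> x = 0 \<and> y = 0"
  shows "Obj (span {a, b})" "dim (span {a, b}) = 2"
proof -
  show dim2: "dim (span {a, b}) = 2"
    by (rule dim_span_pair) (use indep subspace_0[OF Rad_subspace[OF subspace_UNIV]] in metis)
  have r_notin: "r \<notin> span {a, b}"
  proof
    assume "r \<in> span {a, b}"
    then obtain x y where "r = x *s a + y *s b" by (auto simp: span_pair_iff)
    then show False using indep[of x y] r_in_Rad r_nonzero by auto
  qed
  have Rad_cases: "Rad s (span {a, b}) = {0} \<or> (\<exists>w\<in>Rad s (span {a, b}). s e w \<noteq> 0)"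
    using Rad_span_pair_nondegenerate Rad_span_pair_isotropic ab(3) by (metis span_base insertI1)
  have "dim (Rad s (span {a, b})) \<le> 2"
    using dim_subset[OF Rad_subset[of "span {a, b}"]] dim2 by simp
  then show "Obj (span {a, b})"
    using r_notin Rad_cases dim2 n span_subset_H[of "{a, b}"] ab by (intro is_objectI) simp_all
qed

lemma object_plane:
  assumes abc: "a \<in> H" "b \<in> H" "c \<in> H" and e: "s e (radical_vector a b c) \<noteq> 0" and n: "5 \<le> n"
  shows "Obj (span {a, b, c})" "dim (span {a, b, c}) = 3"
proof -
  have indep: "x = 0 \<and> y = 0 \<and> z = 0" if "x *s a + y *s b + z *s c \<in> Rad s UNIV" for x y z
    using coeffs_zero_if_in_Rad_UNIV[OF e that] .
  show dim3: "dim (span {a, b, c}) = 3"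
    by (rule dim_span_triple) (use indep subspace_0[OF Rad_subspace[OF subspace_UNIV]] in metis)
  have r_notin: "r \<notin> span {a, b, c}"
  proof
    assume "r \<in> span {a, b, c}"
    then obtain x y z where "r = x *s a + y *s b + z *s c" by (auto simp: span_triple_iff)
    then show False using indep[of x y z] r_in_Rad r_nonzero by auto
  qed
  have dim_Rad: "dim (Rad s (span {a, b, c})) \<le> 2"
  proof -
    have "Rad s (span {a, b, c}) \<noteq> span {a, b, c}"
    proof
      assume Rad_eq: "Rad s (span {a, b, c}) = span {a, b, c}"
      have "s u v = 0" if "u \<in> {a, b, c}" "v \<in> {a, b, c}" for u v
        using Rad_eq span_base[OF that(1)] span_base[OF that(2)] unfolding Rad_def orth_def by blast
      then show False using e unfolding radical_vector_def by simp
    qed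
    then have "Rad s (span {a, b, c}) \<subset> span {a, b, c}" using Rad_subset by blast
    moreover have "span (Rad s (span {a, b, c})) = Rad s (span {a, b, c})"
      using Rad_subspace[OF subspace_span] by (simp only: span_eq_iff)
    ultimately have "span (Rad s (span {a, b, c})) \<subset> span (span {a, b, c})"
      by (simp only: span_span)
    then have "dim (Rad s (span {a, b, c})) < dim (span {a, b, c})" by (rule dim_psubset)
    then show ?thesis using dim3 by simp
  qed
  have "\<exists>w\<in>Rad s (span {a, b, c}). s e w \<noteq> 0"
    using radical_vector_in_Rad e by blast
  then show "Obj (span {a, b, c})"
    using r_notin dim_Rad dim3 n span_subset_H[of "{a, b, c}"] abc by (intro is_objectI) simp_all
qed

lemma object_line_in_plane:
  assumes "s e (radical_vector a b c) \<noteq> 0" "a \<in> H" "c \<in> H" "s e a \<noteq> 0" "4 \<le> n"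
  shows "Obj (span {a, c})" "dim (span {a, c}) = 2"
proof -
  have indep: "x = 0 \<and> z = 0" if "x *s a + z *s c \<in> Rad s UNIV" for x z
    using coeffs_zero_if_in_Rad_UNIV[OF assms(1), of x 0 z] that by simp
  show "Obj (span {a, c})" "dim (span {a, c}) = 2"
    using object_line[OF assms(2-5) indep] by blast+
qed

lemma incident_subset: "Inc U W \<Longrightarrow> dim U < dim W \<Longrightarrow> U \<subseteq> W"
  unfolding incident_def inc_lt_def by auto

lemma incident_odd:
  assumes "Obj U" "Obj W" "U \<subseteq> W" "dim U < dim W" "odd (dim W)"
  shows "Inc U W"
  using assms unfolding incident_def inc_lt_def by auto

lemma incident_point_line:
  assumes "Obj (span {u})" "Obj L" "dim (span {u}) = 1" "dim L = 2" "u \<in> L" "s e u \<noteq> 0"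
  shows "Inc (span {u}) L"
proof -
  have "span {u} \<subseteq> L" using span_minimal[OF _ object_subspace[OF assms(2)]] assms(5) by simp
  moreover have "span {u} \<inter> Rad s (L \<inter> orth s p) = {0}"
  proof -
    have "v = 0" if v_span: "v \<in> span {u}" and v_orth: "v \<in> orth s p" for v
    proof -
      obtain k where v: "v = k *s u" using v_span by (auto simp: span_singleton)
      then have "k * s e u = 0" using v_orth orth_p_iff by simp
      then show "v = 0" using assms(6) v by simp
    qed
    moreover have "0 \<in> Rad s (L \<inter> orth s p)"
      using subspace_0[OF Rad_subspace[OF subspace_inter[OF object_subspace[OF assms(2)] orth_subspace]]] .
    ultimately show ?thesis unfolding Rad_def using span_zero by blast
  qed
  ultimately have "inc_lt scale s p (span {u}) L" unfolding inc_lt_def using assms(3,4) by simp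
  moreover have "span {u} \<noteq> L" using assms(3,4) by auto
  ultimately show ?thesis using assms(1,2) unfolding incident_def by simp
qed

lemma obtain_point_generator:
  assumes "Obj U" "dim U = 1"
  obtains u where "U = span {u}" "u \<in> H" "s e u = 1"
proof -
  obtain b where "b \<noteq> 0" and Ub: "U = span {b}"
    using obtain_span_singleton_of_dim_1[OF object_subspace[OF assms(1)] assms(2)] by blast
  then have "U \<noteq> {0}" using span_base[of b "{b}"] by auto
  then have "\<not> U \<subseteq> orth s p" using assms(1) Rad_span_singleton Ub unfolding is_object_def by auto
  then obtain v where v: "v \<in> U" "s e v \<noteq> 0" using orth_p_iff by auto
  then obtain k where vk: "v = k *s b" using Ub by (auto simp: span_singleton)
  define u where "u = inverse (s e v) *s v"
  have "span {u} = U"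
    unfolding u_def vk using span_scale_singleton[of "inverse (s e v) * k" b] v vk Ub by auto
  moreover have "s e u = 1" unfolding u_def using v by simp
  moreover have "u \<in> H" using object_subset_H[OF assms(1)] \<open>span {u} = U\<close> span_base by blast
  ultimately show ?thesis using that by auto
qed

lemma points_independent:
  assumes "s e a = 1" "s e b = 1" "span {a} \<noteq> span {b}" "x *s a + y *s b = 0"
  shows "x = 0 \<and> y = 0"
proof -
  have "x + y = 0" using assms(1,2,4) form_add_right[of e "x *s a" "y *s b"] by simp
  then have "x *s (a - b) = 0" using assms(4) by (simp add: algebra_simps add_eq_0_iff)
  then show ?thesis using assms(3) \<open>x + y = 0\<close> by auto
qed

lemma dim_span_pair_of_points:
  assumes "s e a = 1" "s e b = 1" "span {a} \<noteq> span {b}"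
  shows "dim (span {a, b}) = 2"
  by (rule dim_span_pair) (rule points_independent[OF assms])

lemma obtain_dual_in_H:
  assumes "s e x = 0" "s e y = 0"
    and indep: "\<And>a b d. a *s e + b *s x + d *s y \<in> Rad s UNIV \<Longrightarrow> a = 0 \<and> b = 0 \<and> d = 0"
  obtains c where "c \<in> H" "s e c = 0" "s x c = 0" "s y c = 1"
proof -
  obtain c0 where c0: "s e c0 = 0" "s x c0 = 0" "s y c0 = 1"
    using obtain_dual_vector_triple[OF indep] by blast
  obtain c t where "c \<in> H" "c0 = c + t *s e" using H_complement by blast
  moreover have "s x e = 0" "s y e = 0" using assms(1,2) form_skew[of x e] form_skew[of y e] by simp_all
  ultimately show ?thesis using that c0 by simp
qed

context
  fixes u v w c d :: 'v
  assumes in_H: "u \<in> H" "v \<in> H" "w \<in> H" "c \<in> H" "d \<in> H"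
    and pairings: "s e u = 1" "s e v = 0" "s e w = 0" "s e c = 0" "s e d = 0"
      "s v w = 0" "s v c = 1" "s w c = 0" "s v d = 0" "s w d = 1"
begin

lemma five_coeffs_zero:
  assumes "\<forall>q\<in>{e, v, w, c, d}. s q (m *s u + a *s v + b *s w + g *s c + h *s d) = 0"
  shows "m = 0 \<and> a = 0 \<and> b = 0 \<and> g = 0 \<and> h = 0"
proof -
  let ?x = "m *s u + a *s v + b *s w + g *s c + h *s d"
  have E: "s e ?x = 0" "s v ?x = 0" "s w ?x = 0" "s c ?x = 0" "s d ?x = 0"
    using assms by (simp_all only: ball_simps insert_iff)
  have skew: "s w v = 0" "s c v = -1" "s c w = 0" "s d v = 0" "s d w = -1"
    using pairings form_skew[of w v] form_skew[of c v] form_skew[of c w] form_skew[of d v]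
      form_skew[of d w] by simp_all
  have "m = 0" using E(1) pairings by simp
  moreover have "g = 0" using E(2) pairings \<open>m = 0\<close> by simp
  moreover have "h = 0" using E(3) pairings skew(1) \<open>m = 0\<close> by simp
  moreover have "a = 0" using E(4) skew(2,3) \<open>m = 0\<close> \<open>h = 0\<close> by simp
  moreover have "b = 0" using E(5) skew(4,5) \<open>m = 0\<close> \<open>g = 0\<close> by simp
  ultimately show ?thesis by simp
qed

lemma dim_five_space: "dim (span {u, v, w, c, d}) = 5"
proof (rule dim_span_five)
  fix m a b g h assume "m *s u + a *s v + b *s w + g *s c + h *s d = 0"
  then show "m = 0 \<and> a = 0 \<and> b = 0 \<and> g = 0 \<and> h = 0"
    using five_coeffs_zero[of m a b g h] by simp
qed

lemma r_notin_five_space: "r \<notin> span {u, v, w, c, d}"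
proof
  assume "r \<in> span {u, v, w, c, d}"
  then obtain m a b g h where r: "r = m *s u + a *s v + b *s w + g *s c + h *s d"
    by (auto simp: span_five_iff)
  moreover have "\<forall>q\<in>{e, v, w, c, d}. s q r = 0" by simp
  ultimately have "m = 0 \<and> a = 0 \<and> b = 0 \<and> g = 0 \<and> h = 0"
    using five_coeffs_zero[of m a b g h] by simp
  then show False using r r_nonzero by simp
qed

text \<open>The coefficients are chosen to make \<open>five_radical\<close> orthogonal to \<open>v, w, c, d\<close>;
  orthogonality to \<open>u\<close> then comes for free from \<open>s d c = - s c d\<close>.\<close>

definition five_radical :: 'v where
  "five_radical = u + (- s u c - s u w * s d c) *s v + (- s u d - s u v * s c d) *s w
     + s u v *s c + s u w *s d"

lemma five_radical_pairings:
  "s e five_radical = 1" "s u five_radical = 0" "s v five_radical = 0" "s w five_radical = 0"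
  "s c five_radical = 0" "s d five_radical = 0"
proof -
  have skew: "s v u = - s u v" "s w u = - s u w" "s c u = - s u c" "s d u = - s u d"
    "s w v = 0" "s c v = -1" "s c w = 0" "s d v = 0" "s d w = -1" "s d c = - s c d"
    using pairings form_skew[of v u] form_skew[of w u] form_skew[of c u] form_skew[of d u]
      form_skew[of w v] form_skew[of c v] form_skew[of c w] form_skew[of d v] form_skew[of d w]
      form_skew[of d c] by simp_all
  show "s e five_radical = 1" unfolding five_radical_def using pairings by simp
  show "s u five_radical = 0" unfolding five_radical_def using skew(10) by (simp add: algebra_simps)
  show "s v five_radical = 0" "s w five_radical = 0"
    unfolding five_radical_def using pairings skew(1,2,5) by (simp_all add: algebra_simps)
  show "s c five_radical = 0" "s d five_radical = 0"
    unfolding five_radical_def using pairings skew(3,4,6-10) by (simp_all add: algebra_simps)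
qed

lemma five_radical_in_span: "five_radical \<in> span {u, v, w, c, d}"
  unfolding five_radical_def by (intro span_add span_scale span_base) auto

lemma Rad_five_space: "Rad s (span {u, v, w, c, d}) = span {five_radical}"
proof
  have "s x five_radical = 0" if x_span: "x \<in> span {u, v, w, c, d}" for x
  proof -
    obtain m a b g h where "x = m *s u + a *s v + b *s w + g *s c + h *s d"
      using x_span by (auto simp: span_five_iff)
    then show ?thesis using five_radical_pairings by simp
  qed
  then have "five_radical \<in> Rad s (span {u, v, w, c, d})"
    using five_radical_in_span unfolding Rad_def orth_def by blast
  then show "span {five_radical} \<subseteq> Rad s (span {u, v, w, c, d})"
    using span_minimal[OF _ Rad_subspace[OF subspace_span]] by blast
next
  show "Rad s (span {u, v, w, c, d}) \<subseteq> span {five_radical}"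
  proof
    fix x assume x: "x \<in> Rad s (span {u, v, w, c, d})"
    define x' where "x' = x - s e x *s five_radical"
    have "x \<in> span {u, v, w, c, d}" using x Rad_subset by blast
    then have "x' \<in> span {u, v, w, c, d}"
      unfolding x'_def using five_radical_in_span by (intro span_diff span_scale)
    then obtain m a b g h where x': "x' = m *s u + a *s v + b *s w + g *s c + h *s d"
      by (auto simp: span_five_iff)
    have "s q x = 0" if "q \<in> {u, v, w, c, d}" for q
      using x span_base[OF that] unfolding Rad_def orth_def by blast
    then have "s e x' = 0" "s v x' = 0" "s w x' = 0" "s c x' = 0" "s d x' = 0"
      unfolding x'_def using five_radical_pairings by simp_all
    then have "x' = 0" using five_coeffs_zero[of m a b g h] x' by simp
    then have "x = s e x *s five_radical" unfolding x'_def by simp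
    then show "x \<in> span {five_radical}" by (metis span_base span_scale singletonI)
  qed
qed

lemma seven_le_n: "7 \<le> n"
proof -
  have "dim (span (set [u, v, w, c, d, e])) = length [u, v, w, c, d, e]"
  proof (rule dim_span_set_if_unique_coeffs)
    fix cs :: "'f list"
    assume "length cs = length [u, v, w, c, d, e]" "(\<Sum>(k, x)\<leftarrow>zip cs [u, v, w, c, d, e]. k *s x) = 0"
    then obtain m a b g h k where cs: "cs = [m, a, b, g, h, k]"
      and sum: "(m *s u + a *s v + b *s w + g *s c + h *s d) + k *s e = 0"
      by (auto simp: length_Suc_conv add.assoc)
    then have "k *s e = - (m *s u + a *s v + b *s w + g *s c + h *s d)"
      by (simp add: add_eq_0_iff2 add.commute)
    moreover have "- (m *s u + a *s v + b *s w + g *s c + h *s d) \<in> H"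
      using in_H by (intro subspace_neg[OF H_subspace] subspace_add[OF H_subspace]
        subspace_scale[OF H_subspace])
    ultimately have "k = 0" using scale_e_in_H by simp
    then have "m *s u + a *s v + b *s w + g *s c + h *s d = 0" using sum by simp
    then show "\<forall>x\<in>set cs. x = 0" using five_coeffs_zero[of m a b g h] \<open>k = 0\<close> cs by simp
  qed
  then have "6 \<le> dim (UNIV :: 'v set)" using dim_subset[of "span (set [u, v, w, c, d, e])" UNIV] by simp
  then show ?thesis using dim_UNIV_eq odd_n by presburger
qed

lemma five_space_object: "Obj (span {u, v, w, c, d})"
proof (rule is_objectI)
  show "dim (Rad s (span {u, v, w, c, d})) \<le> 2"
    using Rad_five_space by simp
  show "Rad s (span {u, v, w, c, d}) = {0} \<or> (\<exists>x\<in>Rad s (span {u, v, w, c, d}). s e x \<noteq> 0)"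
    using Rad_five_space five_radical_pairings(1) span_base by fastforce
qed (use dim_five_space r_notin_five_space span_subset_H in_H seven_le_n in auto)

end

lemma differences_independent_mod_Rad:
  assumes u: "u1 \<in> H" "u2 \<in> H" "u3 \<in> H"
    and indep: "\<And>x y z. x *s u1 + y *s u2 + z *s u3 = 0 \<Longrightarrow> x = 0 \<and> y = 0 \<and> z = 0"
    and r_notin: "r \<notin> span {u1, u2, u3}"
    and in_Rad: "a *s e + b *s (u3 - u1) + d *s (u2 - u1) \<in> Rad s UNIV"
  shows "a = 0 \<and> b = 0 \<and> d = 0"
proof -
  obtain t where t: "a *s e + b *s (u3 - u1) + d *s (u2 - u1) = t *s r"
    using in_Rad by (auto simp: Rad_UNIV_eq span_singleton)
  then have "a *s e = t *s r - b *s (u3 - u1) - d *s (u2 - u1)" by (simp add: algebra_simps)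
  moreover have "t *s r - b *s (u3 - u1) - d *s (u2 - u1) \<in> H"
    using u r_in_H subspace_diff[OF H_subspace] subspace_scale[OF H_subspace] by simp
  ultimately have "a = 0" using scale_e_in_H by simp
  then have bd: "b *s (u3 - u1) + d *s (u2 - u1) = t *s r" using t by simp
  have "t = 0"
  proof (rule ccontr)
    assume "t \<noteq> 0"
    have "b *s (u3 - u1) + d *s (u2 - u1) \<in> span {u1, u2, u3}"
      by (intro span_add span_scale span_diff span_base) auto
    then have "inverse t *s (t *s r) \<in> span {u1, u2, u3}" using bd span_scale by metis
    then show False using \<open>t \<noteq> 0\<close> r_notin by simp
  qed
  then have "(- b - d) *s u1 + d *s u2 + b *s u3 = 0" using bd by (simp add: algebra_simps)
  then show ?thesis using indep \<open>a = 0\<close> by fastforce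
qed

lemma obtain_five_space:
  assumes u: "u1 \<in> H" "u2 \<in> H" "u3 \<in> H" "s e u1 = 1" "s e u2 = 1" "s e u3 = 1"
    and indep: "\<And>x y z. x *s u1 + y *s u2 + z *s u3 = 0 \<Longrightarrow> x = 0 \<and> y = 0 \<and> z = 0"
    and r_notin: "r \<notin> span {u1, u2, u3}" and isotropic: "s e (radical_vector u1 u2 u3) = 0"
  obtains W where "Obj W" "dim W = 5" "span {u1, u2, u3} \<subseteq> W"
proof -
  define v where "v = u2 - u1"
  define w where "w = u3 - u1"
  have vw_H: "v \<in> H" "w \<in> H" using subspace_diff[OF H_subspace] u unfolding v_def w_def by auto
  have e_vw: "s e v = 0" "s e w = 0" using u unfolding v_def w_def by simp_all
  have "s v w = s e (radical_vector u1 u2 u3)"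
    unfolding v_def w_def radical_vector_def using u form_skew[of u2 u1] by simp
  then have vw: "s v w = 0" using isotropic by simp
  note key = differences_independent_mod_Rad[OF u(1-3) indep r_notin, folded v_def w_def]
  obtain c where c: "c \<in> H" "s e c = 0" "s w c = 0" "s v c = 1"
    using obtain_dual_in_H[OF e_vw(2,1) key] by blast
  obtain d where d: "d \<in> H" "s e d = 0" "s v d = 0" "s w d = 1"
  proof (rule obtain_dual_in_H[OF e_vw])
    fix a b d assume "a *s e + b *s v + d *s w \<in> Rad s UNIV"
    then show "a = 0 \<and> b = 0 \<and> d = 0" using key[of a d b] by (simp add: ac_simps)
  qed
  have "span {u1, u2, u3} \<subseteq> span {u1, v, w, c, d}"
  proof (rule span_minimal)
    have "u2 = u1 + v" "u3 = u1 + w" unfolding v_def w_def by simp_all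
    then show "{u1, u2, u3} \<subseteq> span {u1, v, w, c, d}" by (auto intro: span_add span_base)
  qed simp
  moreover note five_space_object[OF u(1) vw_H c(1) d(1) u(4) e_vw c(2) d(2) vw c(4,3) d(3,4)]
    and dim_five_space[OF u(1) vw_H c(1) d(1) u(4) e_vw c(2) d(2) vw c(4,3) d(3,4)]
  ultimately show ?thesis using that by blast
qed

lemma obtain_apex_over_pair:
  assumes u: "u1 \<in> H" "u2 \<in> H" "s e u1 = 1" "s e u2 = 1" "u1 \<noteq> u2" and r_notin: "r \<notin> span {u1, u2}"
  obtains y where "y \<in> H" "s e y \<noteq> 0" "s e (radical_vector u1 u2 y) \<noteq> 0"
proof -
  define X where "X = u2 - u1 + s u1 u2 *s e"
  \<comment> \<open>\<open>s X y = s e (radical_vector u1 u2 y)\<close> for every \<open>y\<close>\<close>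
  have "X \<notin> Rad s UNIV"
  proof
    assume "X \<in> Rad s UNIV"
    then have X_r: "X \<in> span {r}" using Rad_UNIV_eq by simp
    then have "X \<in> H" using span_subset_H r_in_H by blast
    moreover have "u2 - u1 \<in> H" using u subspace_diff[OF H_subspace] by blast
    ultimately have "X - (u2 - u1) \<in> H" using subspace_diff[OF H_subspace] by blast
    then have "s u1 u2 = 0" using scale_e_in_H unfolding X_def by simp
    then obtain t where t: "u2 - u1 = t *s r" using X_r unfolding X_def by (auto simp: span_singleton)
    show False
    proof (cases "t = 0")
      case True
      then show False using t u(5) by simp
    next
      case False
      then have "r = inverse t *s (u2 - u1)" using t by simp
      then have "r \<in> span {u1, u2}" by (metis span_diff span_scale span_base insertI1 insertI2 singletonI)
      then show False using r_notin by simp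
    qed
  qed
  then obtain x0 where "s X x0 = 1" by (rule obtain_dual_vector)
  obtain h t where h: "h \<in> H" "x0 = h + t *s e" using H_complement by blast
  have "s X e = 0" unfolding X_def using u(3,4) form_skew[of u1 e] form_skew[of u2 e] by simp
  then have "s X h \<noteq> 0" using \<open>s X x0 = 1\<close> h by simp
  moreover have "s e (radical_vector u1 u2 h) = s X h"
    unfolding radical_vector_def X_def using u by simp
  moreover define y where "y = (if s e h \<noteq> 0 then h else u1 + h)"
  moreover have "s e (radical_vector u1 u2 y) = s e (radical_vector u1 u2 h)"
    unfolding y_def radical_vector_def using u form_skew[of u2 u1] by (auto simp: algebra_simps)
  moreover have "y \<in> H" "s e y \<noteq> 0"
    unfolding y_def using h u subspace_add[OF H_subspace] by auto
  ultimately show ?thesis using that by metis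
qed

lemma radical_vector_relations:
  assumes r: "r = l1 *s u1 + l2 *s u2 + l3 *s u3" and u: "s e u1 = 1" "s e u2 = 1" "s e u3 = 1"
  shows "l3 * s e (radical_vector u3 u1 y) = l2 * s e (radical_vector u1 u2 y)"
    and "l3 * s e (radical_vector u2 u3 y) = l1 * s e (radical_vector u1 u2 y)"
proof -
  have skew: "s u2 u1 = - s u1 u2" "s u3 u1 = - s u1 u3" "s u3 u2 = - s u2 u3"
    by (simp_all add: form_skew[symmetric])
  have R0: "l1 + l2 + l3 = 0" using form_r_right[of e] u unfolding r by simp
  have Ry: "l1 * s u1 y + l2 * s u2 y + l3 * s u3 y = 0" using form_r_left[of y] unfolding r by simp
  have R1: "- l2 * s u1 u2 - l3 * s u1 u3 = 0" using form_r_left[of u1] skew unfolding r by simp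
  have R2: "l1 * s u1 u2 - l3 * s u2 u3 = 0" using form_r_left[of u2] skew unfolding r by simp
  have "l3 * s e (radical_vector u3 u1 y) - l2 * s e (radical_vector u1 u2 y)
      = (l1 + l2 + l3) * s u1 y - (l1 * s u1 y + l2 * s u2 y + l3 * s u3 y)
        + s e y * (- l2 * s u1 u2 - l3 * s u1 u3)"
    unfolding radical_vector_def using u skew by (simp add: algebra_simps)
  then show "l3 * s e (radical_vector u3 u1 y) = l2 * s e (radical_vector u1 u2 y)"
    using R0 Ry R1 by simp
  have "l3 * s e (radical_vector u2 u3 y) - l1 * s e (radical_vector u1 u2 y)
      = (l1 * s u1 y + l2 * s u2 y + l3 * s u3 y) - (l1 + l2 + l3) * s u2 y
        - s e y * (l1 * s u1 u2 - l3 * s u2 u3)"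
    unfolding radical_vector_def using u skew by (simp add: algebra_simps)
  then show "l3 * s e (radical_vector u2 u3 y) = l1 * s e (radical_vector u1 u2 y)"
    using R0 Ry R2 by simp
qed

lemma obtain_apex:
  assumes u: "u1 \<in> H" "u2 \<in> H" "u3 \<in> H" "s e u1 = 1" "s e u2 = 1" "s e u3 = 1" "u1 \<noteq> u2"
    and r_in: "r \<in> span {u1, u2, u3}" and r_notin: "r \<notin> span {u1, u2}" "r \<notin> span {u2, u3}"
      "r \<notin> span {u3, u1}"
  obtains y where "y \<in> H" "s e y \<noteq> 0" "s e (radical_vector u1 u2 y) \<noteq> 0"
    "s e (radical_vector u2 u3 y) \<noteq> 0" "s e (radical_vector u3 u1 y) \<noteq> 0"
proof -
  obtain l1 l2 l3 where r: "r = l1 *s u1 + l2 *s u2 + l3 *s u3" using r_in by (auto simp: span_triple_iff)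
  have "l1 \<noteq> 0" using r_notin(2) r unfolding span_pair_iff by (metis add_0 scale_zero_left)
  moreover have "l2 \<noteq> 0"
    using r_notin(3) r unfolding span_pair_iff by (metis add_0 add.commute scale_zero_left)
  moreover have "l3 \<noteq> 0" using r_notin(1) r unfolding span_pair_iff by (metis add_0_right scale_zero_left)
  moreover obtain y where y: "y \<in> H" "s e y \<noteq> 0" and D12: "s e (radical_vector u1 u2 y) \<noteq> 0"
    using obtain_apex_over_pair u r_notin(1) by metis
  ultimately have "l3 * s e (radical_vector u3 u1 y) \<noteq> 0" "l3 * s e (radical_vector u2 u3 y) \<noteq> 0"
    using radical_vector_relations[OF r u(4-6), of y] by simp_all
  then show ?thesis using that y D12 by simp
qed

lemma line_eq_span_points:
  assumes "Obj L" "dim L = 2" "a \<in> L" "b \<in> L" "s e a = 1" "s e b = 1" "span {a} \<noteq> span {b}"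
  shows "L = span {a, b}"
  using subspace_eq_span_pair[OF object_subspace[OF assms(1)] assms(2-4)]
    dim_span_pair_of_points[OF assms(5-7)] by blast

lemma incident_span_subset:
  assumes "Obj (span S)" "Obj W" "finite S" "card S < dim W" "span S \<subseteq> W" "odd (dim W)"
  shows "Inc (span S) W"
  using incident_odd[OF assms(1,2,5) _ assms(6)] dim_le_card[OF span_superset assms(3)] assms(4)
  by simp

section \<open>Null-homotopy of triangles\<close>

abbreviation spanned_triangle :: "'v \<Rightarrow> 'v \<Rightarrow> 'v \<Rightarrow> 'v set list" where
  "spanned_triangle a b c \<equiv> [span {a}, span {a, b}, span {b}, span {b, c}, span {c}, span {c, a}, span {a}]"

lemma homot_triangle_in_odd_object:
  assumes p: "ig.path (spanned_triangle u1 u2 u3)"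
    and W: "Obj W" "odd (dim W)" "3 \<le> dim W" "span {u1, u2, u3} \<subseteq> W"
  shows "ig.homot (spanned_triangle u1 u2 u3) [span {u1}]"
proof -
  have O: "\<forall>X\<in>set (spanned_triangle u1 u2 u3). Obj X" using p ig.path_iff_successively by blast
  have inc: "Inc (span S) W" if "S \<subseteq> {u1, u2, u3}" "card S \<le> 2" "Obj (span S)" for S
  proof (rule incident_span_subset[OF that(3) W(1)])
    show "finite S" using finite_subset[OF that(1)] by simp
    show "card S < dim W" using that(2) W(3) by simp
    show "span S \<subseteq> W" using span_mono[OF that(1)] W(4) by blast
  qed (rule W(2))
  show ?thesis
    by (rule ig.homot_cone_hexagon[OF p]) (use O in \<open>auto intro!: inc simp: card_insert_if\<close>)
qed

lemma homot_triangle_apex: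
  assumes p: "ig.path (spanned_triangle u1 u2 u3)"
    and u: "u1 \<in> H" "u2 \<in> H" "u3 \<in> H" "s e u1 = 1" "s e u2 = 1" "s e u3 = 1"
    and y: "y \<in> H" "s e y \<noteq> 0" and n: "5 \<le> n"
    and D: "s e (radical_vector u1 u2 y) \<noteq> 0" "s e (radical_vector u2 u3 y) \<noteq> 0"
      "s e (radical_vector u3 u1 y) \<noteq> 0"
  shows "ig.homot (spanned_triangle u1 u2 u3) [span {u1}]"
proof -
  have O: "\<forall>X\<in>set (spanned_triangle u1 u2 u3). Obj X" using p ig.path_iff_successively by blast
  have Q: "Obj (span {y})" using object_point y n by simp
  have M: "Obj (span {u1, y})" "dim (span {u1, y}) = 2" "Obj (span {u2, y})" "dim (span {u2, y}) = 2"
    "Obj (span {u3, y})" "dim (span {u3, y}) = 2"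
    using object_line_in_plane[OF D(1)] object_line_in_plane[OF D(2)] object_line_in_plane[OF D(3)]
      u y n by simp_all
  have W: "Obj (span {u1, u2, y})" "Obj (span {u2, u3, y})" "Obj (span {u3, u1, y})"
    "dim (span {u1, u2, y}) = 3" "dim (span {u2, u3, y}) = 3" "dim (span {u3, u1, y}) = 3"
    using object_plane[OF _ _ _ D(1)] object_plane[OF _ _ _ D(2)] object_plane[OF _ _ _ D(3)]
      u y n by simp_all
  have plane_inc: "Inc (span S) (span {a, b, c})" if "S \<subseteq> {a, b, c}" "card S \<le> 2"
    "Obj (span S)" "Obj (span {a, b, c})" "dim (span {a, b, c}) = 3" for S a b c
    by (rule incident_span_subset) (use that span_mono finite_subset[OF that(1)] in auto)
  have line_inc: "Inc (span {a}) (span {b, c})" if "Obj (span {a})" "Obj (span {b, c})"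
    "dim (span {b, c}) = 2" "a \<in> {b, c}" "s e a \<noteq> 0" for a b c
    using incident_point_line[OF that(1,2) _ that(3) span_base[OF that(4)] that(5)] that(5)
    by (cases "a = 0") auto
  show ?thesis
    by (rule ig.homot_apex_hexagon[OF p, of "span {u1, u2, y}" "span {y}" "span {u1, y}" "span {u2, y}"
        "span {u2, u3, y}" "span {u3, y}" "span {u3, u1, y}"])
      (use O Q M W u y in \<open>auto intro!: plane_inc line_inc span_base simp: card_insert_if\<close>)
qed

lemma homot_spanned_triangle_collinear:
  assumes p: "ig.path (spanned_triangle u1 u2 u3)" and u: "s e u1 = 1" "s e u2 = 1" "s e u3 = 1"
    and ne: "span {u1} \<noteq> span {u2}" "span {u2} \<noteq> span {u3}" "span {u3} \<noteq> span {u1}"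
    and collinear: "u3 \<in> span {u1, u2}"
  shows "ig.homot (spanned_triangle u1 u2 u3) [span {u1}]"
proof -
  have "Obj (span {u1, u2})" using p ig.path_iff_successively by simp
  note L = this dim_span_pair_of_points[OF u(1,2) ne(1)]
  have "span {u1, u2} = span {u2, u3}"
    using line_eq_span_points[OF L _ collinear u(2,3) ne(2)] by (simp add: span_base)
  moreover have "span {u1, u2} = span {u3, u1}"
    using line_eq_span_points[OF L collinear _ u(3,1) ne(3)] by (simp add: span_base)
  ultimately show ?thesis using ig.homot_hexagon_single_middle p by simp
qed

lemma triple_independent_if_not_collinear:
  assumes "s e u1 = 1" "s e u2 = 1" "span {u1} \<noteq> span {u2}" "u3 \<notin> span {u1, u2}"
    and xyz: "x *s u1 + y *s u2 + z *s u3 = 0"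
  shows "x = 0 \<and> y = 0 \<and> z = 0"
proof (cases "z = 0")
  case True
  then show ?thesis using points_independent[OF assms(1-3)] xyz by simp
next
  case False
  have "z *s u3 = - (x *s u1 + y *s u2)" using add_eq_0_iff[THEN iffD1, OF xyz] .
  then have "u3 = inverse z *s (- (x *s u1 + y *s u2))"
    using False by (metis scale_scale left_inverse scale_one)
  then have "u3 \<in> span {u1, u2}"
    by (metis span_scale span_neg span_add span_base insertI1 insertI2 singletonI)
  then show ?thesis using assms(4) by blast
qed

lemma homot_spanned_triangle:
  assumes p: "ig.path (spanned_triangle u1 u2 u3)"
    and u: "u1 \<in> H" "u2 \<in> H" "u3 \<in> H" "s e u1 = 1" "s e u2 = 1" "s e u3 = 1"
    and ne: "span {u1} \<noteq> span {u2}" "span {u2} \<noteq> span {u3}" "span {u3} \<noteq> span {u1}"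
    and n: "5 \<le> n"
  shows "ig.homot (spanned_triangle u1 u2 u3) [span {u1}]"
proof (cases "u3 \<in> span {u1, u2}")
  case True
  then show ?thesis using homot_spanned_triangle_collinear p u(4-6) ne by blast
next
  case False
  note indep = triple_independent_if_not_collinear[OF u(4,5) ne(1) False]
  have O: "\<forall>X\<in>set (spanned_triangle u1 u2 u3). Obj X" using p ig.path_iff_successively by blast
  show ?thesis
  proof (cases "s e (radical_vector u1 u2 u3) = 0")
    case False
    then show ?thesis
      using homot_triangle_in_odd_object[OF p] object_plane[OF u(1-3) False n] by simp
  next
    case isotropic: True
    show ?thesis
    proof (cases "r \<in> span {u1, u2, u3}")
      case True
      moreover have "r \<notin> span {u1, u2}" "r \<notin> span {u2, u3}" "r \<notin> span {u3, u1}"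
        using O object_r_notin by simp_all
      moreover have "u1 \<noteq> u2" using ne(1) by blast
      ultimately obtain y where "y \<in> H" "s e y \<noteq> 0" "s e (radical_vector u1 u2 y) \<noteq> 0"
        "s e (radical_vector u2 u3 y) \<noteq> 0" "s e (radical_vector u3 u1 y) \<noteq> 0"
        using obtain_apex u by metis
      then show ?thesis using homot_triangle_apex[OF p u] n by blast
    next
      case False
      then obtain W where "Obj W" "dim W = 5" "span {u1, u2, u3} \<subseteq> W"
        using obtain_five_space[OF u indep _ isotropic] by blast
      then show ?thesis using homot_triangle_in_odd_object[OF p] by simp
    qed
  qed
qed

lemma homot_digon_points:
  assumes p: "ig.path [span {a}, L, span {b}, M, span {a}]" and ab: "s e a = 1" "s e b = 1"
    and on: "a \<in> L" "b \<in> L" "a \<in> M" "b \<in> M" and dims: "dim L = 2" "dim M = 2"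
  shows "ig.homot [span {a}, L, span {b}, M, span {a}] [span {a}]"
proof (rule ig.homot_digon[OF p])
  have "Obj L" "Obj M" using p ig.path_iff_successively by simp_all
  show "L = M \<or> span {a} = span {b}"
    using line_eq_span_points[OF \<open>Obj L\<close> dims(1) on(1,2) ab] line_eq_span_points[OF \<open>Obj M\<close> dims(2) on(3,4) ab]
    by blast
qed

lemma homot_triangle_repeated_point:
  assumes p: "ig.path [span {u1}, L1, span {u2}, L2, span {u3}, L3, span {u1}]"
    and u: "s e u1 = 1" "s e u2 = 1" "s e u3 = 1" and dims: "dim L1 = 2" "dim L2 = 2" "dim L3 = 2"
    and on: "span {u1} \<subseteq> L1" "span {u2} \<subseteq> L1" "span {u2} \<subseteq> L2" "span {u3} \<subseteq> L2"
      "span {u3} \<subseteq> L3" "span {u1} \<subseteq> L3"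
    and repeated: "span {u1} = span {u2} \<or> span {u2} = span {u3} \<or> span {u3} = span {u1}"
  shows "ig.homot [span {u1}, L1, span {u2}, L2, span {u3}, L3, span {u1}] [span {u1}]"
proof -
  have gen: "u1 \<in> span {u1}" "u2 \<in> span {u2}" "u3 \<in> span {u3}" by (simp_all add: span_base)
  from repeated consider "span {u1} = span {u2}" | "span {u2} = span {u3}" | "span {u3} = span {u1}"
    by blast
  then show ?thesis
  proof cases
    case 1
    then have p1: "ig.path ([] @ [span {u1}, L1, span {u1}] @ [L2, span {u3}, L3, span {u1}])"
      using p by simp
    note h = ig.homot_backtrack[OF p1]
    have "ig.path [span {u1}, L2, span {u3}, L3, span {u1}]" using ig.homot_path[OF h p1] by simp
    moreover have "u1 \<in> L2" "u3 \<in> L2" "u1 \<in> L3" "u3 \<in> L3" using 1 on gen by blast+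
    ultimately have "ig.homot [span {u1}, L2, span {u3}, L3, span {u1}] [span {u1}]"
      using homot_digon_points u dims by blast
    then show ?thesis using ig.homot_trans[OF h[simplified]] 1 by simp
  next
    case 2
    then have p1: "ig.path ([span {u1}, L1] @ [span {u2}, L2, span {u2}] @ [L3, span {u1}])"
      using p by simp
    note h = ig.homot_backtrack[OF p1]
    have "ig.path [span {u1}, L1, span {u2}, L3, span {u1}]" using ig.homot_path[OF h p1] by simp
    moreover have "u1 \<in> L1" "u2 \<in> L1" "u1 \<in> L3" "u2 \<in> L3" using 2 on gen by blast+
    ultimately have "ig.homot [span {u1}, L1, span {u2}, L3, span {u1}] [span {u1}]"
      using homot_digon_points u dims by blast
    then show ?thesis using ig.homot_trans[OF h[simplified]] 2 by simp
  next
    case 3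
    then have p1: "ig.path ([span {u1}, L1, span {u2}, L2] @ [span {u1}, L3, span {u1}] @ [])"
      using p by simp
    note h = ig.homot_backtrack[OF p1]
    have "ig.path [span {u1}, L1, span {u2}, L2, span {u1}]" using ig.homot_path[OF h p1] by simp
    moreover have "u1 \<in> L1" "u2 \<in> L1" "u1 \<in> L2" "u2 \<in> L2" using 3 on gen by blast+
    ultimately have "ig.homot [span {u1}, L1, span {u2}, L2, span {u1}] [span {u1}]"
      using homot_digon_points u dims by blast
    then show ?thesis using ig.homot_trans[OF h[simplified]] 3 by simp
  qed
qed

theorem triangle_null_homotopic:
  assumes "is_triangle scale s p H \<gamma>"
  shows "null_homotopic Obj Inc \<gamma>"
proof -
  obtain x1 L1 x2 L2 x3 L3 where \<gamma>: "\<gamma> = [x1, L1, x2, L2, x3, L3, x1]"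
    and dims: "dim x1 = 1" "dim x2 = 1" "dim x3 = 1" "dim L1 = 2" "dim L2 = 2" "dim L3 = 2"
    and p: "ig.path [x1, L1, x2, L2, x3, L3, x1]"
    using assms unfolding is_triangle_def by auto
  have inc: "Inc x1 L1" "Inc x2 L1" "Inc x2 L2" "Inc x3 L2" "Inc x3 L3" "Inc x1 L3"
    using p ig.incident_sym by (simp_all add: ig.path_Cons_Cons)
  have O: "Obj x1" "Obj x2" "Obj x3" "Obj L1" "Obj L2" "Obj L3"
    using p ig.path_iff_successively by simp_all
  have "5 \<le> n" using object_dim_le[OF O(4)] dims(4) odd_n by presburger
  obtain u1 where u1: "x1 = span {u1}" "u1 \<in> H" "s e u1 = 1"
    using obtain_point_generator[OF O(1) dims(1)] by blast
  obtain u2 where u2: "x2 = span {u2}" "u2 \<in> H" "s e u2 = 1"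
    using obtain_point_generator[OF O(2) dims(2)] by blast
  obtain u3 where u3: "x3 = span {u3}" "u3 \<in> H" "s e u3 = 1"
    using obtain_point_generator[OF O(3) dims(3)] by blast
  have on: "span {u1} \<subseteq> L1" "span {u2} \<subseteq> L1" "span {u2} \<subseteq> L2" "span {u3} \<subseteq> L2"
    "span {u3} \<subseteq> L3" "span {u1} \<subseteq> L3"
    using inc incident_subset dims unfolding u1(1) u2(1) u3(1) by simp_all
  have p': "ig.path [span {u1}, L1, span {u2}, L2, span {u3}, L3, span {u1}]"
    using p unfolding u1(1) u2(1) u3(1) .
  have "ig.homot [span {u1}, L1, span {u2}, L2, span {u3}, L3, span {u1}] [span {u1}]"
  proof (cases "span {u1} = span {u2} \<or> span {u2} = span {u3} \<or> span {u3} = span {u1}")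
    case True
    then show ?thesis by (rule homot_triangle_repeated_point[OF p' u1(3) u2(3) u3(3) dims(4-6) on])
  next
    case False
    have "u1 \<in> L1" "u2 \<in> L1" "u2 \<in> L2" "u3 \<in> L2" "u3 \<in> L3" "u1 \<in> L3"
      using on span_base[of u1 "{u1}"] span_base[of u2 "{u2}"] span_base[of u3 "{u3}"] by blast+
    then have "L1 = span {u1, u2}" "L2 = span {u2, u3}" "L3 = span {u3, u1}"
      using line_eq_span_points[OF O(4) dims(4) _ _ u1(3) u2(3)]
        line_eq_span_points[OF O(5) dims(5) _ _ u2(3) u3(3)]
        line_eq_span_points[OF O(6) dims(6) _ _ u3(3) u1(3)] False by simp_all
    then show ?thesis
      using homot_spanned_triangle[OF _ u1(2) u2(2) u3(2) u1(3) u2(3) u3(3)] p' False \<open>5 \<le> n\<close>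
      by simp
  qed
  then show ?thesis unfolding null_homotopic_def \<gamma> u1(1) u2(1) u3(1) by simp
qed

end

lemma (in vector_space) finite_dimensional_if_finite_spanning:
  assumes "finite B0" "span B0 = UNIV"
  obtains B where "finite_dimensional_vector_space scale B"
proof -
  obtain B where B: "B \<subseteq> B0" "independent B" "B0 \<subseteq> span B"
    using maximal_independent_subset[of B0] by blast
  then have "span B = UNIV" using assms(2) span_mono[OF B(3)] by (auto simp: span_span)
  then have "finite_dimensional_vector_space scale B"
    using finite_subset[OF B(1) assms(1)] B(2) by unfold_locales
  then show ?thesis by (rule that)
qed

lemma (in vector_space) obtain_nonzero_in_Rad_UNIV:
  assumes "is_object scale s p H U"
  obtains r where "r \<in> Rad s UNIV" "r \<noteq> 0"
  using assms subspace_0 unfolding is_object_def by blast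

theorem lemma4p5:
  fixes scale :: "'f::field \<Rightarrow> 'v::ab_group_add \<Rightarrow> 'v"
    and s :: "'v \<Rightarrow> 'v \<Rightarrow> 'f"
    and p H :: "'v set"
    and n :: nat
  assumes vs: "vector_space scale"
    and fin: "\<exists>B. finite B \<and> module.span scale B = UNIV"
    and dimV: "vector_space.dim scale (UNIV::'v set) = n"
    and odd_n: "odd n"
    and form: "alt_bilinear scale s"
    and maxrank: "vector_space.dim scale (Rad s UNIV) \<le> 1"
    and p_sub: "module.subspace scale p"
    and p_dim: "vector_space.dim scale p = 1"
    and p_rad: "p \<inter> Rad s UNIV = {0}"
    and H_sub: "module.subspace scale H"
    and H_cap: "H \<inter> p = {0}"
    and H_sum: "{h + q | h q. h \<in> H \<and> q \<in> p} = UNIV"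
    and H_rad: "Rad s UNIV \<subseteq> H"
  shows "\<forall>\<gamma>. is_triangle scale s p H \<gamma> \<longrightarrow>
           null_homotopic (is_object scale s p H) (incident scale s p H) \<gamma>"
proof (intro allI impI)
  fix \<gamma> assume T: "is_triangle scale s p H \<gamma>"
  interpret vector_space scale by (rule vs)
  obtain Bs where "finite_dimensional_vector_space scale Bs"
    using fin finite_dimensional_if_finite_spanning by blast
  then interpret finite_dimensional_vector_space scale Bs .
  obtain e where "e \<noteq> 0" and p: "p = span {e}"
    using obtain_span_singleton_of_dim_1[OF p_sub p_dim] by blast
  then have "e \<notin> H" using H_cap span_base by blast
  have H_complement: "\<exists>h t. h \<in> H \<and> x = h + scale t e" for x
    using H_sum[symmetric] unfolding p span_singleton by blast
  have "is_object scale s p H (hd \<gamma>)" using T unfolding is_triangle_def is_path_def by auto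
  then obtain r where "r \<in> Rad s UNIV" "r \<noteq> 0" by (rule obtain_nonzero_in_Rad_UNIV)
  interpret Pi_geometry scale Bs s p H n e r
    by unfold_locales (use dimV odd_n form maxrank p H_sub \<open>e \<notin> H\<close> H_complement
      \<open>r \<in> Rad s UNIV\<close> \<open>r \<noteq> 0\<close> H_rad in auto)
  show "null_homotopic (is_object scale s p H) (incident scale s p H) \<gamma>"
    by (rule triangle_null_homotopic[OF T])
qed

end
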